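(* Let $\Lambda$ be a row-finite $k$-graph with no sources, and let $\{t_\lambda\}_{\lambda\in\Lambda}$ and $\{\tilde t_\lambda\}_{\lambda\in\Lambda}$ be purely atomic representations of $C^*(\Lambda)$ on Hilbert spaces $\mathcal H$ and $\mathcal H'$, with associated projection valued measures $P$ and $\tilde P$. Suppose $U:\mathcal H\to\mathcal H'$ is a bounded operator with $\tilde t_\lambda U=Ut_\lambda$ and $\tilde t_\lambda^*U=Ut_\lambda^*$ for all $\lambda\in\Lambda$. Then $\tilde P(\{\omega\})U=UP(\{\omega\})$ for every $\omega\in\Lambda^\infty$. Moreover, if $U$ is unitary, then the supports $\{\omega:P(\{\omega\})\neq0\}$ and $\{\omega:\tilde P(\{\omega\})\neq0\}$ coincide.
   Context: A $k$-graph ($k\ge1$) is a countable small category $\Lambda$ with a functor $d:\Lambda\to\mathbb N^k$ satisfying unique factorization: if $d(\lambda)=m+n$ there are unique $\mu,\nu$ with $\lambda=\mu\nu$, $d(\mu)=m$, $d(\nu)=n$. $\Lambda^0$ = vertices, $r,s$ = range, source, $v\Lambda^n=\{\lambda:d(\lambda)=n,r(\lambda)=v\}$; row-finite: each $v\Lambda^n$ finite; no sources: each $v\Lambda^n$ nonempty. Infinite paths are degree-preserving functors $x:\Omega_k\to\Lambda$, where $\Omega_k$ has objects $\mathbb N^k$, morphisms $(p,q)$ with $p\le q$ and $d(p,q)=q-p$; $\Lambda^\infty$ is the set of them. Cylinder sets $Z(\lambda)=\{x:x(0,d(\lambda))=\lambda\}$ generate the Borel $\sigma$-algebra. A representation of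 $C^*(\Lambda)$ is a family of partial isometries $\{t_\lambda\}$ satisfying (CK1) $\{t_v\}_{v\in\Lambda^0}$ mutually orthogonal projections, (CK2) $t_\lambda t_\eta=t_{\lambda\eta}$ when $s(\lambda)=r(\eta)$, (CK3) $t_\lambda^*t_\lambda=t_{s(\lambda)}$, (CK4) $t_v=\sum_{\lambda\in v\Lambda^n}t_\lambda t_\lambda^*$. Its projection valued measure $P$ on Borel sets of $\Lambda^\infty$ satisfies $P(Z(\lambda))=t_\lambda t_\lambda^*$. Purely atomic: there is a Borel $\Omega$ with $P(\Lambda^\infty\setminus\Omega)=0$, $P(\{\omega\})\ne0$ for $\omega\in\Omega$, $\sum_{\omega\in\Omega}P(\{\omega\})=\mathrm{Id}$ strongly. *)

theory Defs
  imports "HOL-Analysis.Analysis"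
begin

text \<open>A complex Hilbert space is encoded as a real Hilbert space (real inner product =
  real part of the complex inner product, complete) together with the operator of
  multiplication by the imaginary unit, which is a real-linear isometry squaring to -1.\<close>

class complex_hilbert = real_inner + complete_space +
  fixes imult :: "'a \<Rightarrow> 'a"
  assumes imult_add: "imult (x + y) = imult x + imult y"
    and imult_scaleR: "imult (r *\<^sub>R x) = r *\<^sub>R imult x"
    and imult_imult: "imult (imult x) = - x"
    and inner_imult: "inner (imult x) (imult y) = inner x y"

text \<open>Bounded complex-linear operators; the Hilbert-space adjoint is the library's
  \<open>adjoint\<close> (for complex-linear maps the real adjoint is the complex adjoint).\<close>

definition cbounded :: "('a::complex_hilbert \<Rightarrow> 'b::complex_hilbert) \<Rightarrow> bool" where
  "cbounded T \<longleftrightarrow> bounded_linear T \<and> (\<forall>x. T (imult x) = imult (T x))"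

definition is_projection :: "('a::complex_hilbert \<Rightarrow> 'a) \<Rightarrow> bool" where
  "is_projection p \<longleftrightarrow> cbounded p \<and> p \<circ> p = p \<and> adjoint p = p"

definition partial_isometry :: "('a::complex_hilbert \<Rightarrow> 'b::complex_hilbert) \<Rightarrow> bool" where
  "partial_isometry T \<longleftrightarrow> cbounded T \<and> T \<circ> adjoint T \<circ> T = T"

definition unitary :: "('a::complex_hilbert \<Rightarrow> 'b::complex_hilbert) \<Rightarrow> bool" where
  "unitary U \<longleftrightarrow> cbounded U \<and> adjoint U \<circ> U = id \<and> U \<circ> adjoint U = id"

text \<open>\<open>\<nat>\<^sup>k\<close> is represented by functions \<open>nat \<Rightarrow> nat\<close> vanishing from index k on.\<close>

definition Nk :: "nat \<Rightarrow> (nat \<Rightarrow> nat) set" where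
  "Nk k = {n. \<forall>i\<ge>k. n i = 0}"

text \<open>A small category given by its set of morphisms; objects are identified with their
  identity morphisms, so \<open>rg\<close>/\<open>sr\<close> return identity morphisms; \<open>comp \<lambda> \<mu>\<close> is
  defined when \<open>sr \<lambda> = rg \<mu>\<close>.\<close>

record 'p kgraph =
  Arr  :: "'p set"
  rg   :: "'p \<Rightarrow> 'p"
  sr   :: "'p \<Rightarrow> 'p"
  comp :: "'p \<Rightarrow> 'p \<Rightarrow> 'p"
  deg  :: "'p \<Rightarrow> nat \<Rightarrow> nat"

definition verts :: "'p kgraph \<Rightarrow> 'p set" where
  "verts G = rg G ` Arr G"

definition is_kgraph :: "nat \<Rightarrow> 'p kgraph \<Rightarrow> bool" where
  "is_kgraph k G \<longleftrightarrow>
     countable (Arr G) \<and>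
     (\<forall>l\<in>Arr G. rg G l \<in> Arr G \<and> sr G l \<in> Arr G) \<and>
     (\<forall>l\<in>Arr G. rg G (rg G l) = rg G l \<and> sr G (rg G l) = rg G l \<and>
                 rg G (sr G l) = sr G l \<and> sr G (sr G l) = sr G l) \<and>
     (\<forall>l\<in>Arr G. comp G (rg G l) l = l \<and> comp G l (sr G l) = l) \<and>
     (\<forall>l\<in>Arr G. \<forall>m\<in>Arr G. sr G l = rg G m \<longrightarrow>
        comp G l m \<in> Arr G \<and> rg G (comp G l m) = rg G l \<and> sr G (comp G l m) = sr G m) \<and>
     (\<forall>l\<in>Arr G. \<forall>m\<in>Arr G. \<forall>n\<in>Arr G. sr G l = rg G m \<and> sr G m = rg G n \<longrightarrow>
        comp G (comp G l m) n = comp G l (comp G m n)) \<and>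
     (\<forall>l\<in>Arr G. deg G l \<in> Nk k) \<and>
     (\<forall>v\<in>verts G. deg G v = (\<lambda>_. 0)) \<and>
     (\<forall>l\<in>Arr G. \<forall>m\<in>Arr G. sr G l = rg G m \<longrightarrow>
        deg G (comp G l m) = (\<lambda>i. deg G l i + deg G m i)) \<and>
     (\<forall>l\<in>Arr G. \<forall>m n. deg G l = (\<lambda>i. m i + n i) \<longrightarrow>
        (\<exists>!p. fst p \<in> Arr G \<and> snd p \<in> Arr G \<and> sr G (fst p) = rg G (snd p) \<and>
              comp G (fst p) (snd p) = l \<and> deg G (fst p) = m \<and> deg G (snd p) = n))"

definition vLn :: "'p kgraph \<Rightarrow> 'p \<Rightarrow> (nat \<Rightarrow> nat) \<Rightarrow> 'p set" where
  "vLn G v n = {l \<in> Arr G. deg G l = n \<and> rg G l = v}"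

definition row_finite :: "nat \<Rightarrow> 'p kgraph \<Rightarrow> bool" where
  "row_finite k G \<longleftrightarrow> (\<forall>v\<in>verts G. \<forall>n\<in>Nk k. finite (vLn G v n))"

definition no_sources :: "nat \<Rightarrow> 'p kgraph \<Rightarrow> bool" where
  "no_sources k G \<longleftrightarrow> (\<forall>v\<in>verts G. \<forall>n\<in>Nk k. vLn G v n \<noteq> {})"

text \<open>Infinite paths: degree preserving functors \<open>\<Omega>\<^sub>k \<rightarrow> \<Lambda>\<close>, the morphism \<open>(p,q)\<close>
  of \<open>\<Omega>\<^sub>k\<close> being sent to \<open>x p q\<close>; extensional (\<open>undefined\<close> off the morphisms of \<open>\<Omega>\<^sub>k\<close>).\<close>

type_synonym 'p ipath = "(nat \<Rightarrow> nat) \<Rightarrow> (nat \<Rightarrow> nat) \<Rightarrow> 'p"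

definition kpaths :: "nat \<Rightarrow> 'p kgraph \<Rightarrow> 'p ipath set" where
  "kpaths k G = {x.
     (\<forall>p q. \<not> (p \<in> Nk k \<and> q \<in> Nk k \<and> p \<le> q) \<longrightarrow> x p q = undefined) \<and>
     (\<forall>p\<in>Nk k. \<forall>q\<in>Nk k. p \<le> q \<longrightarrow>
        x p q \<in> Arr G \<and> deg G (x p q) = (\<lambda>i. q i - p i) \<and>
        rg G (x p q) = x p p \<and> sr G (x p q) = x q q) \<and>
     (\<forall>p\<in>Nk k. \<forall>q\<in>Nk k. \<forall>m\<in>Nk k. p \<le> q \<and> q \<le> m \<longrightarrow>
        x p m = comp G (x p q) (x q m))}"

definition cyl :: "nat \<Rightarrow> 'p kgraph \<Rightarrow> 'p \<Rightarrow> 'p ipath set" where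
  "cyl k G l = {x \<in> kpaths k G. x (\<lambda>_. 0) (deg G l) = l}"

definition kborel :: "nat \<Rightarrow> 'p kgraph \<Rightarrow> 'p ipath set set" where
  "kborel k G = sigma_sets (kpaths k G) (cyl k G ` Arr G)"

definition ck_rep :: "nat \<Rightarrow> 'p kgraph \<Rightarrow> ('p \<Rightarrow> 'h::complex_hilbert \<Rightarrow> 'h) \<Rightarrow> bool" where
  "ck_rep k G t \<longleftrightarrow>
     (\<forall>l\<in>Arr G. partial_isometry (t l)) \<and>
     (\<forall>v\<in>verts G. is_projection (t v)) \<and>
     (\<forall>v\<in>verts G. \<forall>w\<in>verts G. v \<noteq> w \<longrightarrow> t v \<circ> t w = (\<lambda>_. 0)) \<and>
     (\<forall>l\<in>Arr G. \<forall>m\<in>Arr G. sr G l = rg G m \<longrightarrow> t (comp G l m) = t l \<circ> t m) \<and>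
     (\<forall>l\<in>Arr G. adjoint (t l) \<circ> t l = t (sr G l)) \<and>
     (\<forall>v\<in>verts G. \<forall>n\<in>Nk k. t v = (\<lambda>x. \<Sum>l\<in>vLn G v n. t l (adjoint (t l) x)))"

definition is_pvm :: "'x set \<Rightarrow> 'x set set \<Rightarrow> ('x set \<Rightarrow> 'h::complex_hilbert \<Rightarrow> 'h) \<Rightarrow> bool" where
  "is_pvm X M P \<longleftrightarrow>
     (\<forall>A\<in>M. is_projection (P A)) \<and>
     P {} = (\<lambda>_. 0) \<and> P X = id \<and>
     (\<forall>A\<in>M. \<forall>B\<in>M. P (A \<inter> B) = P A \<circ> P B) \<and>
     (\<forall>A :: nat \<Rightarrow> 'x set. range A \<subseteq> M \<longrightarrow> disjoint_family A \<longrightarrow>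
        (\<forall>x. (\<lambda>n. \<Sum>i<n. P (A i) x) \<longlonglongrightarrow> P (\<Union>i. A i) x))"

definition rep_pvm :: "nat \<Rightarrow> 'p kgraph \<Rightarrow> ('p \<Rightarrow> 'h::complex_hilbert \<Rightarrow> 'h)
                        \<Rightarrow> ('p ipath set \<Rightarrow> 'h \<Rightarrow> 'h) \<Rightarrow> bool" where
  "rep_pvm k G t P \<longleftrightarrow> is_pvm (kpaths k G) (kborel k G) P \<and>
     (\<forall>l\<in>Arr G. P (cyl k G l) = t l \<circ> adjoint (t l))"

definition purely_atomic :: "nat \<Rightarrow> 'p kgraph \<Rightarrow> ('p ipath set \<Rightarrow> 'h::complex_hilbert \<Rightarrow> 'h) \<Rightarrow> bool" where
  "purely_atomic k G P \<longleftrightarrow>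
     (\<exists>\<Omega>\<in>kborel k G. P (kpaths k G - \<Omega>) = (\<lambda>_. 0) \<and>
        (\<forall>\<omega>\<in>\<Omega>. P {\<omega>} \<noteq> (\<lambda>_. 0)) \<and>
        (\<forall>x. ((\<lambda>\<omega>. P {\<omega>} x) has_sum x) \<Omega>))"

end

theory Submission
  imports Defs
begin

text \<open>A singleton \<open>{\<omega>}\<close> is the decreasing intersection of the cylinders
  \<open>Z(\<omega>(0, (n,\<dots>,n)))\<close>, and on a cylinder \<open>Z(\<lambda>)\<close> both measures are \<open>t\<^sub>\<lambda> t\<^sub>\<lambda>\<^sup>*\<close>, which \<open>U\<close>
  intertwines. Multiplicativity extends this to finite intersections of cylinders, and strong
  continuity of a projection valued measure along decreasing sequences to \<open>{\<omega>}\<close>. Conjugating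
  by a unitary then shows that \<open>P({\<omega>})\<close> and \<open>P'({\<omega>})\<close> vanish together.\<close>

lemma pvm_Int:
  assumes "is_pvm X M P" "A \<in> M" "B \<in> M"
  shows "P (A \<inter> B) x = P A (P B x)"
  using assms unfolding is_pvm_def by simp

lemma pvm_Un_disjoint:
  assumes P: "is_pvm X M P" and M: "sigma_algebra X M"
    and "A \<in> M" "B \<in> M" "A \<inter> B = {}"
  shows "P (A \<union> B) x = P A x + P B x"
proof -
  interpret sigma_algebra X M by (rule M)
  have "(\<lambda>n. P (binaryset A B n) x) sums (P A x + P B x)"
    by (rule binaryset_sums) (use P in \<open>simp add: is_pvm_def\<close>)
  moreover have "range (binaryset A B) \<subseteq> M"
    using assms by (simp add: range_binaryset_eq)
  moreover have "disjoint_family (binaryset A B)"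
    using assms by (simp add: disjoint_family_on_def binaryset_def Int_commute)
  ultimately show ?thesis
    using P unfolding is_pvm_def sums_def by (metis UN_binaryset_eq LIMSEQ_unique)
qed

lemma pvm_Diff:
  assumes P: "is_pvm X M P" and M: "sigma_algebra X M"
    and "A \<in> M" "B \<in> M" "B \<subseteq> A"
  shows "P (A - B) x = P A x - P B x"
proof -
  interpret sigma_algebra X M by (rule M)
  have "P ((A - B) \<union> B) x = P (A - B) x + P B x"
    by (rule pvm_Un_disjoint[OF P M]) (use assms in auto)
  moreover have "(A - B) \<union> B = A"
    using assms by blast
  ultimately show ?thesis by simp
qed

lemma pvm_decseq_tendsto:
  assumes P: "is_pvm X M P" and M: "sigma_algebra X M"
    and B: "range B \<subseteq> M" and dec: "decseq B"
  shows "(\<lambda>n. P (B n) x) \<longlonglongrightarrow> P (\<Inter>n. B n) x"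
proof -
  interpret sigma_algebra X M by (rule M)
  define D where "D i = B i - B (Suc i)" for i
  have "disjoint_family D"
    using disjoint_family_Suc[of "\<lambda>n. - B n"] dec
    unfolding D_def by (simp add: decseq_Suc_iff Diff_eq Int_commute)
  moreover have "range D \<subseteq> M"
    using B by (auto simp: D_def)
  moreover have "(\<Union>i. D i) = B 0 - (\<Inter>n. B n)"
  proof
    show "(\<Union>i. D i) \<subseteq> B 0 - (\<Inter>n. B n)"
      using dec by (auto simp: D_def decseq_def)
    show "B 0 - (\<Inter>n. B n) \<subseteq> (\<Union>i. D i)"
    proof
      fix y assume "y \<in> B 0 - (\<Inter>n. B n)"
      then obtain n where "y \<in> B 0" "y \<notin> B n" by blast
      then have "\<exists>i<n. y \<in> B i \<and> y \<notin> B (Suc i)"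
        by (induction n) (auto intro: less_SucI)
      then show "y \<in> (\<Union>i. D i)" by (auto simp: D_def)
    qed
  qed
  ultimately have "(\<lambda>n. \<Sum>i<n. P (D i) x) \<longlonglongrightarrow> P (B 0 - (\<Inter>n. B n)) x"
    using P unfolding is_pvm_def by metis
  moreover have "P (D i) x = P (B i) x - P (B (Suc i)) x" for i
    unfolding D_def using B dec by (intro pvm_Diff[OF P M]) (auto simp: decseq_Suc_iff)
  moreover have "P (B 0 - (\<Inter>n. B n)) x = P (B 0) x - P (\<Inter>n. B n) x"
    using B by (intro pvm_Diff[OF P M]) auto
  ultimately have "(\<lambda>n. P (B 0) x - P (B n) x) \<longlonglongrightarrow> P (B 0) x - P (\<Inter>n. B n) x"
    by (simp add: sum_lessThan_telescope'[of "\<lambda>n. P (B n) x"])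
  from tendsto_diff[OF tendsto_const[of "P (B 0) x"] this] show ?thesis by simp
qed

lemma pvm_intertwine_INT:
  fixes C :: "nat \<Rightarrow> 'x set"
  assumes P: "is_pvm X M P" and P': "is_pvm X M P'" and M: "sigma_algebra X M"
    and C: "range C \<subseteq> M" and U: "bounded_linear U"
    and intertwine: "\<And>m y. P' (C m) (U y) = U (P (C m) y)"
  shows "P' (\<Inter>m. C m) (U y) = U (P (\<Inter>m. C m) y)"
proof -
  interpret sigma_algebra X M by (rule M)
  define B where "B n = (\<Inter>m\<le>n. C m)" for n
  have BM: "range B \<subseteq> M"
    using C by (auto simp: B_def)
  have B_Suc: "B (Suc n) = B n \<inter> C (Suc n)" for n
    by (auto simp: B_def atMost_Suc)
  have "decseq B"
    by (simp add: decseq_Suc_iff B_Suc)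
  have INT_B: "(\<Inter>n. B n) = (\<Inter>m. C m)"
    by (auto simp: B_def)
  have B_intertwine: "P' (B n) (U y) = U (P (B n) y)" for n y
  proof (induction n arbitrary: y)
    case 0
    then show ?case by (simp add: B_def intertwine)
  next
    case (Suc n)
    have "B n \<in> M" "C (Suc n) \<in> M"
      using BM C by auto
    then show ?case
      by (simp add: B_Suc pvm_Int[OF P] pvm_Int[OF P'] Suc intertwine)
  qed
  have "(\<lambda>n. P' (B n) (U y)) \<longlonglongrightarrow> P' (\<Inter>m. C m) (U y)"
    using pvm_decseq_tendsto[OF P' M BM \<open>decseq B\<close>] by (simp add: INT_B)
  moreover have "(\<lambda>n. P' (B n) (U y)) \<longlonglongrightarrow> U (P (\<Inter>m. C m) y)"
    using bounded_linear.tendsto[OF U pvm_decseq_tendsto[OF P M BM \<open>decseq B\<close>]]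
    by (simp add: INT_B B_intertwine)
  ultimately show ?thesis by (rule LIMSEQ_unique)
qed

lemma unitary_intertwine_zero_iff:
  assumes U: "unitary U" and intertwine: "Q' \<circ> U = U \<circ> Q"
  shows "Q = (\<lambda>_. 0) \<longleftrightarrow> Q' = (\<lambda>_. 0)"
proof -
  have VU: "adjoint U (U a) = a" and UV: "U (adjoint U b) = b" for a b
    using U unfolding unitary_def by (metis comp_apply id_apply)+
  have U0: "U 0 = 0"
    using U by (simp add: unitary_def cbounded_def linear_simps(3))
  have QU: "Q' (U a) = U (Q a)" for a
    using intertwine by (metis comp_apply)
  show ?thesis
  proof
    assume "Q = (\<lambda>_. 0)"
    then show "Q' = (\<lambda>_. 0)" using QU[of "adjoint U _"] by (simp add: fun_eq_iff UV U0)
  next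
    assume "Q' = (\<lambda>_. 0)"
    then have "U (Q a) = U 0" for a using QU[of a] U0 by simp
    then show "Q = (\<lambda>_. 0)" by (metis VU)
  qed
qed

definition Nk_diag :: "nat \<Rightarrow> nat \<Rightarrow> nat \<Rightarrow> nat" where
  "Nk_diag k n = (\<lambda>i. if i < k then n else 0)"

lemma zero_in_Nk: "(\<lambda>_. 0) \<in> Nk k"
  by (simp add: Nk_def)

lemma Nk_diag_in_Nk: "Nk_diag k n \<in> Nk k"
  by (simp add: Nk_def Nk_diag_def)

lemma le_Nk_diag:
  assumes "q \<in> Nk k"
  shows "q \<le> Nk_diag k (\<Sum>i<k. q i)"
  using assms by (auto simp: le_fun_def Nk_def Nk_diag_def intro: member_le_sum)

lemma kpaths_arr:
  assumes "x \<in> kpaths k G" "p \<in> Nk k" "q \<in> Nk k" "p \<le> q"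
  shows "x p q \<in> Arr G" "deg G (x p q) = (\<lambda>i. q i - p i)"
    and "rg G (x p q) = x p p" "sr G (x p q) = x q q"
  using conjunct1[OF conjunct2[OF assms(1)[unfolded kpaths_def mem_Collect_eq]]] assms(2-4) by blast+

lemma kpaths_comp:
  assumes "x \<in> kpaths k G" "p \<in> Nk k" "q \<in> Nk k" "m \<in> Nk k" "p \<le> q" "q \<le> m"
  shows "x p m = comp G (x p q) (x q m)"
  using conjunct2[OF conjunct2[OF assms(1)[unfolded kpaths_def mem_Collect_eq]]] assms(2-6) by blast

lemma kpaths_undefined:
  assumes "x \<in> kpaths k G" "\<not> (p \<in> Nk k \<and> q \<in> Nk k \<and> p \<le> q)"
  shows "x p q = undefined"
  using conjunct1[OF assms(1)[unfolded kpaths_def mem_Collect_eq]] assms(2) by blast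

lemma kgraph_comp:
  assumes "is_kgraph k G" "f \<in> Arr G" "g \<in> Arr G" "sr G f = rg G g"
  shows "comp G f g \<in> Arr G" "deg G (comp G f g) = (\<lambda>i. deg G f i + deg G g i)"
  using assms unfolding is_kgraph_def by (elim conjE; simp)+

lemma kgraph_factorization_unique:
  assumes G: "is_kgraph k G"
    and fg: "f \<in> Arr G" "g \<in> Arr G" "sr G f = rg G g"
    and "f' \<in> Arr G" "g' \<in> Arr G" "sr G f' = rg G g'"
    and "comp G f g = comp G f' g'" "deg G f = deg G f'" "deg G g = deg G g'"
  shows "f = f' \<and> g = g'"
proof -
  have "\<exists>!p. fst p \<in> Arr G \<and> snd p \<in> Arr G \<and> sr G (fst p) = rg G (snd p) \<and>
          comp G (fst p) (snd p) = comp G f g \<and> deg G (fst p) = deg G f \<and> deg G (snd p) = deg G g"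
    using G kgraph_comp[OF G fg] unfolding is_kgraph_def by (elim conjE) blast
  then have "(f, g) = (f', g')"
    using assms by (elim ex1E) (metis fst_conv snd_conv)
  then show ?thesis by simp
qed

lemma kpaths_segment_eq:
  assumes G: "is_kgraph k G" and x: "x \<in> kpaths k G" and y: "y \<in> kpaths k G"
    and N: "p \<in> Nk k" "q \<in> Nk k" "m \<in> Nk k" and le: "p \<le> q" "q \<le> m"
    and eq: "x p m = y p m"
  shows "x p q = y p q \<and> x q m = y q m"
  using kpaths_arr[OF x N(1,2) le(1)] kpaths_arr[OF x N(2,3) le(2)]
    kpaths_arr[OF y N(1,2) le(1)] kpaths_arr[OF y N(2,3) le(2)]
    kpaths_comp[OF x N le] kpaths_comp[OF y N le] eq
  by (intro kgraph_factorization_unique[OF G]) simp_all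

lemma kpaths_eqI:
  assumes G: "is_kgraph k G" and x: "x \<in> kpaths k G" and y: "y \<in> kpaths k G"
    and eq: "\<And>n. x (\<lambda>_. 0) (Nk_diag k n) = y (\<lambda>_. 0) (Nk_diag k n)"
  shows "x = y"
proof (intro ext)
  fix p q :: "nat \<Rightarrow> nat"
  show "x p q = y p q"
  proof (cases "p \<in> Nk k \<and> q \<in> Nk k \<and> p \<le> q")
    case False
    then show ?thesis using kpaths_undefined[OF x] kpaths_undefined[OF y] by metis
  next
    case True
    then have p: "p \<in> Nk k" and q: "q \<in> Nk k" and "p \<le> q" by auto
    define m where "m = Nk_diag k (\<Sum>i<k. q i)"
    have m: "m \<in> Nk k" "q \<le> m"
      using le_Nk_diag[OF q] unfolding m_def by (auto intro: Nk_diag_in_Nk)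
    have "p \<le> m" "(\<lambda>_. 0) \<le> p"
      using \<open>p \<le> q\<close> m(2) by (auto simp: le_fun_def intro: order_trans)
    then have "x p m = y p m"
      using kpaths_segment_eq[OF G x y zero_in_Nk p m(1)] eq unfolding m_def by blast
    then show ?thesis
      using kpaths_segment_eq[OF G x y p q m(1) \<open>p \<le> q\<close> m(2)] by blast
  qed
qed

lemma singleton_eq_INT_cyl:
  assumes G: "is_kgraph k G" and \<omega>: "\<omega> \<in> kpaths k G"
  shows "{\<omega>} = (\<Inter>n. cyl k G (\<omega> (\<lambda>_. 0) (Nk_diag k n)))"
proof -
  have "cyl k G (\<omega> (\<lambda>_. 0) (Nk_diag k n))
          = {x \<in> kpaths k G. x (\<lambda>_. 0) (Nk_diag k n) = \<omega> (\<lambda>_. 0) (Nk_diag k n)}" for n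
    using kpaths_arr(2)[OF \<omega> zero_in_Nk Nk_diag_in_Nk] by (simp add: cyl_def le_fun_def)
  then show ?thesis
    using \<omega> kpaths_eqI[OF G _ \<omega>] by auto
qed

lemma sigma_algebra_kborel: "sigma_algebra (kpaths k G) (kborel k G)"
  unfolding kborel_def by (rule sigma_algebra_sigma_sets) (auto simp: cyl_def)

lemma cyl_in_kborel: "l \<in> Arr G \<Longrightarrow> cyl k G l \<in> kborel k G"
  unfolding kborel_def by (rule sigma_sets.Basic) simp

lemma rep_pvm_cyl_intertwine:
  assumes "rep_pvm k G t P" "rep_pvm k G t' P'" "l \<in> Arr G"
    and "t' l \<circ> U = U \<circ> t l" "adjoint (t' l) \<circ> U = U \<circ> adjoint (t l)"
  shows "P' (cyl k G l) (U y) = U (P (cyl k G l) y)"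
  using assms unfolding rep_pvm_def by (metis comp_apply)

theorem proposition3p7:
  fixes k :: nat and G :: "'p kgraph"
    and t :: "'p \<Rightarrow> 'h::complex_hilbert \<Rightarrow> 'h"
    and t' :: "'p \<Rightarrow> 'g::complex_hilbert \<Rightarrow> 'g"
    and P :: "'p ipath set \<Rightarrow> 'h \<Rightarrow> 'h"
    and P' :: "'p ipath set \<Rightarrow> 'g \<Rightarrow> 'g"
    and U :: "'h \<Rightarrow> 'g"
  assumes "k \<ge> 1" and "is_kgraph k G" and "row_finite k G" and "no_sources k G"
    and "ck_rep k G t" and "ck_rep k G t'"
    and "rep_pvm k G t P" and "rep_pvm k G t' P'"
    and "purely_atomic k G P" and "purely_atomic k G P'"
    and "cbounded U"
    and "\<forall>l\<in>Arr G. t' l \<circ> U = U \<circ> t l"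
    and "\<forall>l\<in>Arr G. adjoint (t' l) \<circ> U = U \<circ> adjoint (t l)"
  shows "(\<forall>\<omega>\<in>kpaths k G. P' {\<omega>} \<circ> U = U \<circ> P {\<omega>}) \<and>
         (unitary U \<longrightarrow>
            {\<omega>\<in>kpaths k G. P {\<omega>} \<noteq> (\<lambda>_. 0)} = {\<omega>\<in>kpaths k G. P' {\<omega>} \<noteq> (\<lambda>_. 0)})"
proof -
  have P: "is_pvm (kpaths k G) (kborel k G) P" and P': "is_pvm (kpaths k G) (kborel k G) P'"
    using assms(7,8) by (simp_all add: rep_pvm_def)
  have U: "bounded_linear U"
    using assms(11) by (simp add: cbounded_def)
  have intertwine: "P' {\<omega>} \<circ> U = U \<circ> P {\<omega>}" if \<omega>: "\<omega> \<in> kpaths k G" for \<omega>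
  proof -
    let ?C = "\<lambda>n. cyl k G (\<omega> (\<lambda>_. 0) (Nk_diag k n))"
    have arr: "\<omega> (\<lambda>_. 0) (Nk_diag k n) \<in> Arr G" for n
      using kpaths_arr(1)[OF \<omega> zero_in_Nk Nk_diag_in_Nk] by (simp add: le_fun_def)
    have "P' (\<Inter>n. ?C n) (U y) = U (P (\<Inter>n. ?C n) y)" for y
      using arr assms(7,8,12,13)
      by (intro pvm_intertwine_INT[OF P P' sigma_algebra_kborel _ U] rep_pvm_cyl_intertwine)
         (auto intro: cyl_in_kborel)
    then show ?thesis
      by (simp add: fun_eq_iff singleton_eq_INT_cyl[OF assms(2) \<omega>, symmetric])
  qed
  then show ?thesis
    using unitary_intertwine_zero_iff by blast
qed

end
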